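(* Let $\mathcal{G}=(V,E)$ be an unweighted simple directed graph, let $i\in V$, and let $\phi$ be a spanning converging forest chosen uniformly at random from the set $\mathcal{F}$ of all spanning converging forests of $\mathcal{G}$. Then $$\overline{\omega}_{ii}(\phi)=\frac{1}{1+d_i}\Big(1+\sum_{k\in N^-_i}\widehat{\omega}_{ik}(\phi)\Big)$$ is an unbiased estimator of $\omega_{ii}$, its variance is $${\rm Var}(\overline{\omega}_{ii})=\frac{3\omega_{ii}}{1+d_i}-\frac{2}{(1+d_i)^2}-\omega_{ii}^2,$$ and this variance is always less than or equal to the variance of the estimator $\widehat{\omega}_{ii}(\phi)$.
   Context: $\mathcal{G}=(V,E)$ has $n$ nodes; $a_{ij}=1$ if $(i,j)\in E$ and $0$ otherwise. $d_i=\sum_j a_{ij}$ is the out-degree of $i$, $\mathbf{D}=\mathrm{diag}(d_1,\dots,d_n)$, $\mathbf{L}=\mathbf{D}-\mathbf{A}$, and the forest matrix is $\mathbf{\Omega}=(\mathbf{I}+\mathbf{L})^{-1}=(\omega_{ij})$. $N^-_i=\{k:(k,i)\in E\}$ is the set of in-neighbors of $i$. A rooted converging tree is a weakly connected digraph without cycles in which one node (the root) has out-degree $0$ and every other node has out-degree $1$ (an isolated node is such a tree rooted at itself). A spanning converging forest of $\mathcal{G}$ is a spanning subgraph (all of $V$, a subset of $E$) whose weakly connected components are rooted converging trees; $r_\phi(i)$ is the root of the tree of $\phi$ containing $i$. The basic estimator is $\widehat{\omega}_{ij}(\phi)=\mathbb{I}_{\{r_\phi(i)=j\}}$ (1 if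 $r_\phi(i)=j$, else 0). *)

theory Defs
  imports "HOL-Probability.Probability"
begin

definition adj_matrix :: "('n::finite \<times> 'n) set \<Rightarrow> real^'n^'n" where
  "adj_matrix E = (\<chi> i j. if (i, j) \<in> E then 1 else 0)"

definition out_deg :: "('n::finite \<times> 'n) set \<Rightarrow> 'n \<Rightarrow> nat" where
  "out_deg E i = card {j. (i, j) \<in> E}"

definition degree_matrix :: "('n::finite \<times> 'n) set \<Rightarrow> real^'n^'n" where
  "degree_matrix E = (\<chi> i j. if i = j then real (out_deg E i) else 0)"

definition laplacian :: "('n::finite \<times> 'n) set \<Rightarrow> real^'n^'n" where
  "laplacian E = degree_matrix E - adj_matrix E"

definition forest_matrix :: "('n::finite \<times> 'n) set \<Rightarrow> real^'n^'n" where
  "forest_matrix E = matrix_inv (mat 1 + laplacian E)"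

definition in_nbrs :: "('n \<times> 'n) set \<Rightarrow> 'n \<Rightarrow> 'n set" where
  "in_nbrs E i = {k. (k, i) \<in> E}"

definition rooted_converging_tree :: "'n set \<Rightarrow> ('n \<times> 'n) set \<Rightarrow> bool" where
  "rooted_converging_tree C T \<longleftrightarrow>
     T \<subseteq> C \<times> C \<and> C \<noteq> {} \<and>
     (\<forall>x\<in>C. \<forall>y\<in>C. (x, y) \<in> (T \<union> T\<inverse>)\<^sup>*) \<and>
     acyclic T \<and>
     (\<exists>r\<in>C. card {y. (r, y) \<in> T} = 0 \<and>
        (\<forall>x\<in>C - {r}. card {y. (x, y) \<in> T} = 1))"

definition weak_component :: "('n \<times> 'n) set \<Rightarrow> 'n \<Rightarrow> 'n set" where
  "weak_component F x = {y. (x, y) \<in> (F \<union> F\<inverse>)\<^sup>*}"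

definition spanning_converging_forest :: "('n::finite \<times> 'n) set \<Rightarrow> ('n \<times> 'n) set \<Rightarrow> bool" where
  "spanning_converging_forest E F \<longleftrightarrow>
     F \<subseteq> E \<and>
     (\<forall>x. rooted_converging_tree (weak_component F x)
            (F \<inter> (weak_component F x \<times> weak_component F x)))"

definition sc_forests :: "('n::finite \<times> 'n) set \<Rightarrow> ('n \<times> 'n) set set" where
  "sc_forests E = {F. spanning_converging_forest E F}"

definition forest_root :: "('n \<times> 'n) set \<Rightarrow> 'n \<Rightarrow> 'n" where
  "forest_root F i = (THE r. (i, r) \<in> F\<^sup>* \<and> (\<forall>y. (r, y) \<notin> F))"

definition omega_hat :: "('n \<times> 'n) set \<Rightarrow> 'n \<Rightarrow> 'n \<Rightarrow> real" where
  "omega_hat F i j = (if forest_root F i = j then 1 else 0)"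

definition omega_bar :: "('n::finite \<times> 'n) set \<Rightarrow> 'n \<Rightarrow> ('n \<times> 'n) set \<Rightarrow> real" where
  "omega_bar E i F = (1 + (\<Sum>k\<in>in_nbrs E i. omega_hat F i k)) / (1 + real (out_deg E i))"

end

theory Submission
  imports Defs
begin

text \<open>A spanning converging forest is just a functional acyclic subrelation of \<open>E\<close>. Sorting
  forests by the out-edge of \<open>i\<close> (none, or an edge \<open>(i, k)\<close> to a node outside the tree rooted
  at \<open>i\<close>) shows that the number \<open>N x j\<close> of forests in which \<open>x\<close> has root \<open>j\<close> satisfies
  \<open>(1 + d\<^sub>i) N i j = [i = j] |\<F>| + (\<Sum>(i, m) \<in> E. N m j)\<close>, i.e. \<open>(I + L) N = |\<F>| I\<close>. So
  \<open>\<omega>\<^sub>x\<^sub>j\<close> is the probability that \<open>x\<close> has root \<open>j\<close> in a uniform random forest, and the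
  \<open>(i, i)\<close> entry of \<open>\<Omega> (I + L) = I\<close> says that the new estimator is unbiased. That estimator
  takes only the values \<open>1/t\<close> and \<open>2/t\<close>, where \<open>t = 1 + d\<^sub>i\<close>, so its square is affine in it,
  which gives its variance. The variance of the indicator estimator is \<open>w - w\<^sup>2\<close> for
  \<open>w = \<omega>\<^sub>i\<^sub>i\<close>, and the comparison reduces to \<open>3w/t - 2/t\<^sup>2 \<le> w\<close> for \<open>0 \<le> w \<le> 1\<close> and
  \<open>w t \<le> 2\<close>, which holds because \<open>t = 1\<close> or \<open>t \<ge> 2\<close>.\<close>

lemma reachable_root_unique:
  assumes "single_valued F" "(x, a) \<in> F\<^sup>*" "(x, b) \<in> F\<^sup>*" "a \<notin> Domain F" "b \<notin> Domain F"
  shows "a = b"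
  using single_valued_confluent[OF assms(1-3)] assms(4,5)
  by (metis DomainI converse_rtranclE)

lemma ex_reachable_root:
  fixes F :: "('n::finite \<times> 'n) set"
  assumes "acyclic F"
  obtains r where "(x, r) \<in> F\<^sup>*" "r \<notin> Domain F"
proof -
  have "wf (F\<inverse>)"
    using assms by (simp add: finite_acyclic_wf_converse)
  then obtain r where r: "(x, r) \<in> F\<^sup>*" and min: "\<And>y. (r, y) \<in> F \<Longrightarrow> (x, y) \<notin> F\<^sup>*"
    using wf_eq_minimal[THEN iffD1, rule_format, of "F\<inverse>" x "{y. (x, y) \<in> F\<^sup>*}"] by auto
  have "r \<notin> Domain F"
    using r min by (meson DomainE rtrancl.rtrancl_into_rtrancl)
  with r show thesis by (rule that)
qed

context
  fixes F :: "('n::finite \<times> 'n) set"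
  assumes sv: "single_valued F" and ac: "acyclic F"
begin

lemma forest_root_eqI:
  assumes "(x, r) \<in> F\<^sup>*" "r \<notin> Domain F"
  shows "forest_root F x = r"
  unfolding forest_root_def
  using assms reachable_root_unique[OF sv, of x] by (intro the_equality) (auto simp: Domain_iff)

lemma forest_root_reachable: "(x, forest_root F x) \<in> F\<^sup>*"
  and forest_root_not_Domain: "forest_root F x \<notin> Domain F"
  by (metis ex_reachable_root[OF ac] forest_root_eqI)+

lemma forest_root_edge:
  assumes "(x, y) \<in> F"
  shows "forest_root F x = forest_root F y"
  using assms forest_root_reachable forest_root_not_Domain
  by (meson converse_rtrancl_into_rtrancl forest_root_eqI)

lemma forest_root_weak_component:
  assumes "y \<in> weak_component F x"
  shows "forest_root F y = forest_root F x"
proof -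
  have "(x, y) \<in> (F \<union> F\<inverse>)\<^sup>*"
    using assms by (simp add: weak_component_def)
  then show ?thesis
    by induction (auto simp: forest_root_edge)
qed

end

lemma weak_component_closed:
  assumes "a \<in> weak_component F x" "(a, b) \<in> F"
  shows "b \<in> weak_component F x"
  using assms unfolding weak_component_def
  by (simp add: rtrancl.rtrancl_into_rtrancl)

lemma trancl_within_weak_component:
  assumes "(a, b) \<in> F\<^sup>+" "a \<in> weak_component F x"
  shows "(a, b) \<in> (Restr F (weak_component F x))\<^sup>+"
proof -
  have "(a, b) \<in> (Restr F (weak_component F x))\<^sup>+ \<and> b \<in> weak_component F x"
    using assms(1)
  proof induction
    case (base b)
    then have "b \<in> weak_component F x"
      using assms(2) by (rule weak_component_closed[rotated])
    then show ?case using base assms(2) by (simp add: r_into_trancl')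
  next
    case (step y z)
    then have "z \<in> weak_component F x"
      using weak_component_closed by metis
    with step show ?case by (auto intro: trancl.trancl_into_trancl)
  qed
  then show ?thesis ..
qed

lemma rtrancl_within_weak_component:
  assumes "(a, b) \<in> F\<^sup>*" "a \<in> weak_component F x"
  shows "(a, b) \<in> (Restr F (weak_component F x))\<^sup>*"
  using assms trancl_within_weak_component by (metis rtrancl_eq_or_trancl)

lemma self_in_weak_component: "x \<in> weak_component F x"
  by (simp add: weak_component_def)

lemma spanning_converging_forest_single_valued:
  assumes "spanning_converging_forest E F"
  shows "single_valued F"
proof (rule single_valuedI)
  fix a y z assume ay: "(a, y) \<in> F" and az: "(a, z) \<in> F"
  define C where "C = weak_component F a"
  have "rooted_converging_tree C (Restr F C)"
    using assms by (simp add: spanning_converging_forest_def C_def)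
  then obtain r where r: "card {w. (r, w) \<in> Restr F C} = 0"
    and others: "\<forall>v\<in>C - {r}. card {w. (v, w) \<in> Restr F C} = 1"
    unfolding rooted_converging_tree_def by blast
  have "a \<in> C"
    by (simp add: C_def self_in_weak_component)
  then have yz: "y \<in> {w. (a, w) \<in> Restr F C}" "z \<in> {w. (a, w) \<in> Restr F C}"
    using ay az weak_component_closed by (auto simp: C_def)
  show "y = z"
  proof (cases "a = r")
    case True
    then show ?thesis using r yz by (auto simp: card_eq_0_iff)
  next
    case False
    then have "card {w. (a, w) \<in> Restr F C} = 1"
      using others \<open>a \<in> C\<close> by blast
    then show ?thesis using yz by (metis card_1_singletonE singletonD)
  qed
qed

lemma spanning_converging_forest_acyclic:
  assumes "spanning_converging_forest E F"
  shows "acyclic F"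
  unfolding acyclic_def
proof (intro allI notI)
  fix x assume "(x, x) \<in> F\<^sup>+"
  then have "(x, x) \<in> (Restr F (weak_component F x))\<^sup>+"
    by (simp add: trancl_within_weak_component self_in_weak_component)
  moreover have "acyclic (Restr F (weak_component F x))"
    using assms by (simp add: spanning_converging_forest_def rooted_converging_tree_def)
  ultimately show False
    by (simp add: acyclic_def)
qed

lemma rooted_converging_tree_weak_component:
  fixes F :: "('n::finite \<times> 'n) set"
  assumes sv: "single_valued F" and ac: "acyclic F"
  shows "rooted_converging_tree (weak_component F x) (Restr F (weak_component F x))"
proof -
  define C where "C = weak_component F x"
  define r where "r = forest_root F x"
  have root_C: "forest_root F a = r" if "a \<in> C" for a
    using that forest_root_weak_component[OF sv ac] by (simp add: C_def r_def)
  have to_root: "(a, r) \<in> (Restr F C)\<^sup>*" if "a \<in> C" for a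
    using rtrancl_within_weak_component[OF forest_root_reachable[OF sv ac, of a]] that root_C
    by (simp add: C_def)
  have "r \<in> C"
    using forest_root_reachable[OF sv ac, of x]
    by (simp add: C_def r_def weak_component_def in_rtrancl_UnI)
  have connected: "(a, b) \<in> (Restr F C \<union> (Restr F C)\<inverse>)\<^sup>*" if "a \<in> C" "b \<in> C" for a b
  proof -
    have "(a, r) \<in> (Restr F C \<union> (Restr F C)\<inverse>)\<^sup>*" "(b, r) \<in> (Restr F C \<union> (Restr F C)\<inverse>)\<^sup>*"
      using to_root that by (meson in_rtrancl_UnI)+
    moreover have "(Restr F C \<union> (Restr F C)\<inverse>)\<inverse> = Restr F C \<union> (Restr F C)\<inverse>"
      by blast
    ultimately show ?thesis
      by (metis rtrancl_converseI rtrancl_trans)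
  qed
  have "card {w. (r, w) \<in> Restr F C} = 0"
    using forest_root_not_Domain[OF sv ac, of x] by (auto simp: r_def)
  moreover have "card {w. (a, w) \<in> Restr F C} = 1" if "a \<in> C - {r}" for a
  proof -
    have "a \<in> Domain F"
      using that root_C forest_root_eqI[OF sv ac, of a a] by auto
    then obtain b where ab: "(a, b) \<in> F" by blast
    moreover have "b \<in> C"
      using ab that weak_component_closed by (metis C_def DiffD1)
    ultimately have "{w. (a, w) \<in> Restr F C} = {b}"
      using that single_valuedD[OF sv] by blast
    then show ?thesis by simp
  qed
  moreover have "acyclic (Restr F C)"
    using ac by (auto intro: acyclic_subset)
  ultimately have "rooted_converging_tree C (Restr F C)"
    unfolding rooted_converging_tree_def using \<open>r \<in> C\<close> connected by auto
  then show ?thesis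
    by (simp add: C_def)
qed

lemma spanning_converging_forest_iff:
  "spanning_converging_forest E F \<longleftrightarrow> F \<subseteq> E \<and> single_valued F \<and> acyclic F"
proof
  assume "spanning_converging_forest E F"
  then show "F \<subseteq> E \<and> single_valued F \<and> acyclic F"
    using spanning_converging_forest_single_valued spanning_converging_forest_acyclic
    unfolding spanning_converging_forest_def by blast
next
  assume "F \<subseteq> E \<and> single_valued F \<and> acyclic F"
  then show "spanning_converging_forest E F"
    by (simp add: spanning_converging_forest_def rooted_converging_tree_weak_component)
qed

lemma sc_forests_eq: "sc_forests E = {F. F \<subseteq> E \<and> single_valued F \<and> acyclic F}"
  by (simp add: sc_forests_def spanning_converging_forest_iff)

section \<open>Splitting forests at the out-edge of a node\<close>

definition forests_rooted_at :: "('n::finite \<times> 'n) set \<Rightarrow> 'n \<Rightarrow> ('n \<times> 'n) set set" where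
  "forests_rooted_at E i = {F \<in> sc_forests E. i \<notin> Domain F}"

definition admissible_targets :: "('n \<times> 'n) set \<Rightarrow> 'n \<Rightarrow> ('n \<times> 'n) set \<Rightarrow> 'n set" where
  "admissible_targets E i F = {k. (i, k) \<in> E \<and> forest_root F k \<noteq> i}"

lemma forests_rooted_atD:
  assumes "F \<in> forests_rooted_at E i"
  shows "F \<subseteq> E" "single_valued F" "acyclic F" "i \<notin> Domain F"
  using assms by (simp_all add: forests_rooted_at_def sc_forests_eq)

lemma forest_root_rooted_at:
  assumes "F \<in> forests_rooted_at E i"
  shows "forest_root F i = i"
  using forests_rooted_atD[OF assms] by (simp add: forest_root_eqI)

lemma insert_edge_in_sc_forests:
  assumes F: "F \<in> forests_rooted_at E i" and k: "k \<in> admissible_targets E i F"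
  shows "insert (i, k) F \<in> sc_forests E"
proof -
  note F = forests_rooted_atD[OF F]
  have "(k, i) \<notin> F\<^sup>*"
    using k forest_root_eqI[OF F(2,3) _ F(4), of k] by (auto simp: admissible_targets_def)
  moreover have "single_valued (insert (i, k) F)"
    using F(2,4) by (auto simp: single_valued_def)
  ultimately show ?thesis
    using F k by (simp add: sc_forests_eq admissible_targets_def)
qed

lemma forest_root_insert_edge:
  assumes F: "F \<in> forests_rooted_at E i" and k: "k \<in> admissible_targets E i F"
  shows "forest_root (insert (i, k) F) x =
           (if forest_root F x = i then forest_root F k else forest_root F x)"
proof -
  let ?G = "insert (i, k) F"
  note F = forests_rooted_atD[OF F]
  have G: "single_valued ?G" "acyclic ?G"
    using insert_edge_in_sc_forests[OF assms] by (simp_all add: sc_forests_eq)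
  have reach: "(y, forest_root F y) \<in> ?G\<^sup>*" for y
    using forest_root_reachable[OF F(2,3)] rtrancl_mono[of F ?G] by blast
  have root: "forest_root F y \<notin> Domain ?G" if "forest_root F y \<noteq> i" for y
    using that forest_root_not_Domain[OF F(2,3)] by auto
  show ?thesis
  proof (cases "forest_root F x = i")
    case True
    then have "(x, i) \<in> ?G\<^sup>*"
      using reach[of x] by simp
    then have "(x, forest_root F k) \<in> ?G\<^sup>*"
      using reach[of k] by (meson insertI1 rtrancl_into_rtrancl rtrancl_trans)
    then show ?thesis
      using True k root[of k] forest_root_eqI[OF G] by (simp add: admissible_targets_def)
  next
    case False
    then show ?thesis
      using reach[of x] root[of x] forest_root_eqI[OF G] by simp
  qed
qed

lemma sc_forests_split:
  "sc_forests E = forests_rooted_at E i \<union>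
     (\<lambda>(F, k). insert (i, k) F) ` (SIGMA F:forests_rooted_at E i. admissible_targets E i F)"
proof (intro equalityI subsetI)
  fix G assume G: "G \<in> sc_forests E"
  show "G \<in> forests_rooted_at E i \<union>
     (\<lambda>(F, k). insert (i, k) F) ` (SIGMA F:forests_rooted_at E i. admissible_targets E i F)"
  proof (cases "i \<in> Domain G")
    case False
    then show ?thesis using G by (simp add: forests_rooted_at_def)
  next
    case True
    then obtain k where ik: "(i, k) \<in> G" by blast
    define F where "F = G - {(i, k)}"
    have G_props: "G \<subseteq> E" "single_valued G" "acyclic G"
      using G by (simp_all add: sc_forests_eq)
    have "F \<subseteq> G" "i \<notin> Domain F"
      using single_valuedD[OF G_props(2) ik] by (auto simp: F_def)
    then have F_rooted: "F \<in> forests_rooted_at E i"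
      using G_props single_valued_subset acyclic_subset
      by (simp add: forests_rooted_at_def sc_forests_eq) blast
    have G_eq: "G = insert (i, k) F"
      using ik by (auto simp: F_def)
    then have "(k, i) \<notin> F\<^sup>*"
      using G_props(3) by (metis acyclic_insert)
    then have "k \<in> admissible_targets E i F"
      using ik G_props(1) forest_root_reachable[OF forests_rooted_atD(2,3)[OF F_rooted], of k]
      by (auto simp: admissible_targets_def)
    with F_rooted G_eq show ?thesis by blast
  qed
next
  fix G assume "G \<in> forests_rooted_at E i \<union>
     (\<lambda>(F, k). insert (i, k) F) ` (SIGMA F:forests_rooted_at E i. admissible_targets E i F)"
  then show "G \<in> sc_forests E"
    using insert_edge_in_sc_forests by (auto simp: forests_rooted_at_def)
qed

lemma inj_on_insert_edge:
  "inj_on (\<lambda>(F, k). insert (i, k) F) (SIGMA F:forests_rooted_at E i. admissible_targets E i F)"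
proof (rule inj_onI, clarsimp)
  fix F k F' k'
  assume "F \<in> forests_rooted_at E i" "F' \<in> forests_rooted_at E i"
    and eq: "insert (i, k) F = insert (i, k') F'"
  then have roots: "i \<notin> Domain F" "i \<notin> Domain F'"
    by (simp_all add: forests_rooted_atD)
  then have "k = k'"
    using eq by (metis DomainI insertE insertI1 prod.inject)
  moreover have "F = insert (i, k) F - {(i, k)}" "F' = insert (i, k') F' - {(i, k')}"
    using roots by auto
  ultimately show "F = F' \<and> k = k'"
    using eq by metis
qed

lemma sum_sc_forests_split:
  "(\<Sum>G\<in>sc_forests E. f G) =
     (\<Sum>F\<in>forests_rooted_at E i. f F + (\<Sum>k\<in>admissible_targets E i F. f (insert (i, k) F)))"
proof -
  let ?A = "SIGMA F:forests_rooted_at E i. admissible_targets E i F"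
  have "forests_rooted_at E i \<inter> (\<lambda>(F, k). insert (i, k) F) ` ?A = {}"
    by (auto simp: forests_rooted_at_def)
  then have "(\<Sum>G\<in>sc_forests E. f G) =
      (\<Sum>F\<in>forests_rooted_at E i. f F) + (\<Sum>G\<in>(\<lambda>(F, k). insert (i, k) F) ` ?A. f G)"
    by (subst sc_forests_split[of E i], intro sum.union_disjoint) simp_all
  also have "(\<Sum>G\<in>(\<lambda>(F, k). insert (i, k) F) ` ?A. f G) =
      (\<Sum>F\<in>forests_rooted_at E i. \<Sum>k\<in>admissible_targets E i F. f (insert (i, k) F))"
    by (subst sum.reindex[OF inj_on_insert_edge]) (simp add: sum.Sigma split_def)
  finally show ?thesis
    by (simp add: sum.distrib)
qed

section \<open>The matrix-forest theorem\<close>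

text \<open>Here \<rho> is the root map of a forest in which \<open>i\<close> is a root, \<open>N\<close> the out-neighbours
  of \<open>i\<close> and \<open>K\<close> those outside the tree of \<open>i\<close>; the innermost term is the root of \<open>m\<close> after
  the edge \<open>(i, k)\<close> has been added.\<close>

lemma sum_roots_attach_edge:
  fixes \<rho> :: "'a \<Rightarrow> 'a" and N :: "'a set" and i j :: 'a
  assumes "finite N"
  defines "K \<equiv> {k \<in> N. \<rho> k \<noteq> i}"
  shows "(1 + real (card N)) * (of_bool (i = j) + (\<Sum>k\<in>K. of_bool (\<rho> k = j)))
       = of_bool (i = j) * (1 + real (card K))
         + (\<Sum>m\<in>N. of_bool (\<rho> m = j) + (\<Sum>k\<in>K. of_bool ((if \<rho> m = i then \<rho> k else \<rho> m) = j)))"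
proof -
  define B where "B = {k \<in> N. \<rho> k = i}"
  define a where "a = (\<Sum>k\<in>K. of_bool (\<rho> k = j) :: real)"
  have N_split: "N = B \<union> K" "B \<inter> K = {}" "finite B" "finite K"
    using assms(1) by (auto simp: B_def K_def)
  then have card_N: "card N = card B + card K"
    by (simp add: card_Un_disjoint)
  have sum_N: "(\<Sum>m\<in>N. g m) = (\<Sum>m\<in>B. g m) + (\<Sum>m\<in>K. g m)" for g :: "'a \<Rightarrow> real"
    using N_split by (simp add: sum.union_disjoint)
  have "(\<Sum>m\<in>N. of_bool (\<rho> m = j) :: real) = card B * of_bool (i = j) + a"
    unfolding sum_N a_def by (simp add: B_def)
  moreover have "(\<Sum>m\<in>N. \<Sum>k\<in>K. of_bool ((if \<rho> m = i then \<rho> k else \<rho> m) = j) :: real)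
      = card B * a + card K * a"
    unfolding sum_N a_def by (simp add: B_def K_def sum_distrib_left)
  ultimately show ?thesis
    unfolding card_N a_def[symmetric] by (simp add: sum.distrib algebra_simps)
qed

definition root_count :: "('n::finite \<times> 'n) set \<Rightarrow> 'n \<Rightarrow> 'n \<Rightarrow> real" where
  "root_count E x j = (\<Sum>F\<in>sc_forests E. of_bool (forest_root F x = j))"

lemma root_count_recurrence:
  "(1 + real (out_deg E i)) * root_count E i j
     = of_bool (i = j) * real (card (sc_forests E)) + (\<Sum>m\<in>{k. (i, k) \<in> E}. root_count E m j)"
proof -
  let ?N = "{k. (i, k) \<in> E}" and ?R = "forests_rooted_at E i"
  have targets: "admissible_targets E i F = {k \<in> ?N. forest_root F k \<noteq> i}" for F
    by (auto simp: admissible_targets_def)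
  have count_i: "root_count E i j =
      (\<Sum>F\<in>?R. of_bool (i = j) + (\<Sum>k\<in>admissible_targets E i F. of_bool (forest_root F k = j)))"
    unfolding root_count_def sum_sc_forests_split[where i = i]
    by (intro sum.cong) (simp_all add: forest_root_insert_edge forest_root_rooted_at)
  have count_m: "root_count E m j = (\<Sum>F\<in>?R. of_bool (forest_root F m = j) +
      (\<Sum>k\<in>admissible_targets E i F.
         of_bool ((if forest_root F m = i then forest_root F k else forest_root F m) = j)))" for m
    unfolding root_count_def sum_sc_forests_split[where i = i]
    by (intro sum.cong) (simp_all add: forest_root_insert_edge)
  have card: "real (card (sc_forests E)) = (\<Sum>F\<in>?R. 1 + real (card (admissible_targets E i F)))"
    using sum_sc_forests_split[where f = "\<lambda>_. 1 :: real" and i = i] by simp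
  have "of_bool (i = j) * real (card (sc_forests E)) + (\<Sum>m\<in>?N. root_count E m j)
     = (\<Sum>F\<in>?R. of_bool (i = j) * (1 + real (card (admissible_targets E i F)))
         + (\<Sum>m\<in>?N. of_bool (forest_root F m = j) + (\<Sum>k\<in>admissible_targets E i F.
              of_bool ((if forest_root F m = i then forest_root F k else forest_root F m) = j))))"
    unfolding card count_m by (subst sum.swap) (simp add: sum.distrib sum_distrib_left)
  also have "\<dots> = (\<Sum>F\<in>?R. (1 + real (card ?N)) *
      (of_bool (i = j) + (\<Sum>k\<in>admissible_targets E i F. of_bool (forest_root F k = j))))"
    unfolding targets by (intro sum.cong refl sum_roots_attach_edge[symmetric]) simp
  also have "\<dots> = (1 + real (out_deg E i)) * root_count E i j"
    unfolding count_i out_deg_def by (simp add: sum_distrib_left)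
  finally show ?thesis by simp
qed

lemma matrix_inv_eqI:
  fixes A B :: "'a::field^'n^'n"
  assumes "A ** B = mat 1"
  shows "matrix_inv A = B"
proof -
  have "A ** B = mat 1 \<and> B ** A = mat 1"
    using assms matrix_left_right_inverse by blast
  then have "A ** matrix_inv A = mat 1 \<and> matrix_inv A ** A = mat 1"
    unfolding matrix_inv_def by (rule someI)
  then have left_inverse: "matrix_inv A ** A = mat 1" ..
  have "matrix_inv A = matrix_inv A ** (A ** B)"
    using assms by (simp add: matrix_mul_rid)
  also have "\<dots> = B"
    using left_inverse by (simp add: matrix_mul_assoc matrix_mul_lid)
  finally show ?thesis .
qed

lemma identity_plus_laplacian_entry:
  "(mat 1 + laplacian E) $ a $ b
     = (if a = b then 1 + real (out_deg E a) else 0) - (if (a, b) \<in> E then 1 else 0)"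
  by (simp add: laplacian_def degree_matrix_def adj_matrix_def mat_def)

lemma sc_forests_nonempty: "sc_forests E \<noteq> {}"
proof -
  have "{} \<in> sc_forests E"
    by (simp add: sc_forests_eq acyclic_def)
  then show ?thesis by blast
qed

lemma identity_plus_laplacian_row_sum:
  "(\<Sum>k\<in>UNIV. (mat 1 + laplacian E) $ i $ k * g k)
     = (1 + real (out_deg E i)) * g i - (\<Sum>k\<in>{k. (i, k) \<in> E}. g k)"
  by (simp only: identity_plus_laplacian_entry)
    (simp add: left_diff_distrib sum_subtractf if_distrib[of "\<lambda>x. x * _"] sum.inter_filter[symmetric]
      cong: if_cong)

lemma identity_plus_laplacian_column_sum:
  "(\<Sum>k\<in>UNIV. g k * (mat 1 + laplacian E) $ k $ i)
     = (1 + real (out_deg E i)) * g i - (\<Sum>k\<in>in_nbrs E i. g k)"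
  by (simp only: identity_plus_laplacian_entry)
    (simp add: right_diff_distrib sum_subtractf if_distrib[of "\<lambda>x. _ * x"] sum.inter_filter[symmetric]
      in_nbrs_def cong: if_cong)

definition root_frequency :: "('n::finite \<times> 'n) set \<Rightarrow> real^'n^'n" where
  "root_frequency E = (\<chi> x j. root_count E x j / real (card (sc_forests E)))"

lemma identity_plus_laplacian_root_frequency:
  "(mat 1 + laplacian E) ** root_frequency E = mat 1"
proof -
  have "((mat 1 + laplacian E) ** root_frequency E) $ i $ j = of_bool (i = j)" for i j
  proof -
    have "((mat 1 + laplacian E) ** root_frequency E) $ i $ j
        = ((1 + real (out_deg E i)) * root_count E i j - (\<Sum>k\<in>{k. (i, k) \<in> E}. root_count E k j))
          / real (card (sc_forests E))"
      unfolding matrix_matrix_mult_def root_frequency_def vec_lambda_beta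
        identity_plus_laplacian_row_sum[of E i "\<lambda>k. root_count E k j / _"]
      by (simp add: sum_divide_distrib diff_divide_distrib)
    then show ?thesis
      using root_count_recurrence[of E i j] sc_forests_nonempty[of E] by simp
  qed
  then show ?thesis
    by (simp add: vec_eq_iff mat_def)
qed

theorem forest_matrix_eq_root_frequency: "forest_matrix E = root_frequency E"
  unfolding forest_matrix_def by (rule matrix_inv_eqI identity_plus_laplacian_root_frequency)+

lemma forest_matrix_diagonal_identity:
  "(1 + real (out_deg E i)) * forest_matrix E $ i $ i - (\<Sum>k\<in>in_nbrs E i. forest_matrix E $ i $ k) = 1"
proof -
  have "forest_matrix E ** (mat 1 + laplacian E) = mat 1"
    using identity_plus_laplacian_root_frequency matrix_left_right_inverse
    by (metis forest_matrix_eq_root_frequency)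
  then have "(forest_matrix E ** (mat 1 + laplacian E)) $ i $ i = 1"
    by (simp add: mat_def)
  then show ?thesis
    unfolding matrix_matrix_mult_def vec_lambda_beta identity_plus_laplacian_column_sum .
qed

abbreviation random_forest :: "('n::finite \<times> 'n) set \<Rightarrow> ('n \<times> 'n) set pmf" where
  "random_forest E \<equiv> pmf_of_set (sc_forests E)"

lemma integrable_random_forest [simp]:
  fixes f :: "('n::finite \<times> 'n) set \<Rightarrow> real"
  shows "integrable (measure_pmf (random_forest E)) f"
  by (rule integrable_measure_pmf_finite) (simp add: sc_forests_nonempty)

lemma expectation_omega_hat:
  "measure_pmf.expectation (random_forest E) (\<lambda>F. omega_hat F x j) = forest_matrix E $ x $ j"
  by (simp add: integral_pmf_of_set sc_forests_nonempty forest_matrix_eq_root_frequency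
      root_frequency_def root_count_def omega_hat_def of_bool_def)

lemma omega_bar_eq_indicator:
  "omega_bar E i F = (1 + (if forest_root F i \<in> in_nbrs E i then 1 else 0)) / (1 + real (out_deg E i))"
  by (simp add: omega_bar_def omega_hat_def sum.delta')

lemma omega_bar_squared:
  "(omega_bar E i F)\<^sup>2 = 3 * omega_bar E i F / (1 + real (out_deg E i)) - 2 / (1 + real (out_deg E i))\<^sup>2"
  by (simp add: omega_bar_eq_indicator field_simps power2_eq_square)

lemma expectation_omega_bar:
  "measure_pmf.expectation (random_forest E) (omega_bar E i) = forest_matrix E $ i $ i"
proof -
  have "measure_pmf.expectation (random_forest E) (omega_bar E i)
      = (1 + (\<Sum>k\<in>in_nbrs E i. forest_matrix E $ i $ k)) / (1 + real (out_deg E i))"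
    unfolding omega_bar_def by (simp add: integral_add integral_sum expectation_omega_hat)
  also have "\<dots> = forest_matrix E $ i $ i"
    using forest_matrix_diagonal_identity[of E i] by (simp add: field_simps)
  finally show ?thesis .
qed

lemma variance_omega_bar:
  "measure_pmf.variance (random_forest E) (omega_bar E i)
     = 3 * forest_matrix E $ i $ i / (1 + real (out_deg E i))
       - 2 / (1 + real (out_deg E i))\<^sup>2 - (forest_matrix E $ i $ i)\<^sup>2"
  by (subst measure_pmf.variance_eq) (simp_all add: omega_bar_squared integral_diff expectation_omega_bar)

lemma variance_omega_hat:
  "measure_pmf.variance (random_forest E) (\<lambda>F. omega_hat F i i)
     = forest_matrix E $ i $ i - (forest_matrix E $ i $ i)\<^sup>2"
proof -
  have "(omega_hat F i i)\<^sup>2 = omega_hat F i i" for F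
    by (simp add: omega_hat_def)
  then show ?thesis
    by (subst measure_pmf.variance_eq) (simp_all add: expectation_omega_hat)
qed

lemma variance_omega_bar_le_variance_omega_hat:
  "measure_pmf.variance (random_forest E) (omega_bar E i)
     \<le> measure_pmf.variance (random_forest E) (\<lambda>F. omega_hat F i i)"
proof -
  define w where "w = forest_matrix E $ i $ i"
  define t where "t = 1 + real (out_deg E i)"
  have "0 \<le> w" "w \<le> 1"
    unfolding w_def expectation_omega_hat[symmetric]
    by (auto intro!: measure_pmf.integral_ge_const measure_pmf.integral_le_const simp: omega_hat_def)
  moreover have "w * t \<le> 2"
  proof -
    have "w \<le> 2 / t"
      unfolding w_def expectation_omega_bar[symmetric] t_def
      by (intro measure_pmf.integral_le_const) (auto simp: omega_bar_eq_indicator divide_right_mono)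
    then show ?thesis
      by (simp add: t_def field_simps)
  qed
  moreover have "t = 1 \<or> t \<ge> 2"
    by (cases "out_deg E i") (simp_all add: t_def)
  ultimately have "3 * w / t - 2 / t\<^sup>2 \<le> w"
  proof (elim disjE)
    assume "t \<ge> 2"
    have "0 \<le> w * t * (t - 2)"
      using \<open>0 \<le> w\<close> \<open>t \<ge> 2\<close> by simp
    then have "3 * w * t - 2 \<le> w * t\<^sup>2"
      using \<open>w * t \<le> 2\<close> by (simp add: power2_eq_square algebra_simps)
    then show ?thesis
      using \<open>t \<ge> 2\<close> by (simp add: field_simps power2_eq_square)
  qed simp
  then show ?thesis
    by (simp add: variance_omega_bar variance_omega_hat w_def t_def)
qed

theorem lemma4p3:
  fixes E :: "('n::finite \<times> 'n) set" and i :: 'n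
  assumes simple: "\<forall>v. (v, v) \<notin> E"
  shows "measure_pmf.expectation (pmf_of_set (sc_forests E)) (omega_bar E i)
           = forest_matrix E $ i $ i \<and>
         measure_pmf.variance (pmf_of_set (sc_forests E)) (omega_bar E i)
           = 3 * forest_matrix E $ i $ i / (1 + real (out_deg E i))
             - 2 / (1 + real (out_deg E i))^2 - (forest_matrix E $ i $ i)^2 \<and>
         measure_pmf.variance (pmf_of_set (sc_forests E)) (omega_bar E i)
           \<le> measure_pmf.variance (pmf_of_set (sc_forests E)) (\<lambda>F. omega_hat F i i)"
  using expectation_omega_bar variance_omega_bar variance_omega_bar_le_variance_omega_hat
  by blast

end
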